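(* Let $\mathscr T^\otimes=(V,\mathcal E^\otimes)$ be the tensor product of rooted directed trees $\mathscr T_1,\dots,\mathscr T_d$, let $\mathscr T^\otimes_{\mathsf{root}}=(V^\otimes,\mathcal F)$ be the component of $\mathscr T^\otimes$ containing $\mathsf{root}=(\mathsf{root}_1,\dots,\mathsf{root}_d)$, let $\mathscr T$ be the directed Cartesian product of $\mathscr T_1,\dots,\mathscr T_d$, and let $\mathsf{Root}^\otimes=\{\mathfrak v\in V:\mathfrak v_j=\mathsf{root}_j\text{ for at least one }j\}$. Then: (i) if $\mathfrak v\in\mathsf{Root}^\otimes$, there is no $\mathfrak u\in V$ with $(\mathfrak u,\mathfrak v)\in\mathcal E^\otimes$; (ii) for each $\mathfrak v\in V\setminus\mathsf{Root}^\otimes$ there is a unique $\mathfrak u\in V$ with $(\mathfrak u,\mathfrak v)\in\mathcal E^\otimes$; (iii) $\mathscr T^\otimes$ has no circuits; (iv) no two distinct vertices of $\mathsf{Root}^\otimes$ can be connected by a path in $\mathscr T^\otimes$; (v) there is a bijective correspondence between the components of $\mathscr T^\otimes$ and the elements of $\mathsf{Root}^\otimes$; in particular $\mathscr T^\otimes$ has countably many components; (vi) each component is a rooted directed tree whose root lies in $\mathsf{Root}^\otimes$; (vii) $\mathscr T^\otimes$ is locally finite if and only if $\mathscr T$ is locally finite; (viii) $\mathscr T^\otimes$ is leafless; (ix) if each $\mathscr T_j$ has finite branching index $k_{\mathscr T_j}$, then the branching index of $\mathscr T^\otimes_{\mathsf{root}}$ equals $\max\{k_{\mathscr T_j}:1\le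 j\le d\}$; (x) for each $v\in V$ there exists $\mathfrak v\in V^\otimes$ such that $|\alpha_v|=\alpha_{\mathfrak v}$, where $\alpha_v$ is the depth of $v$ in $\mathscr T$ and $\alpha_{\mathfrak v}$ the depth of $\mathfrak v$ in the directed tree $\mathscr T^\otimes_{\mathsf{root}}$.
   Context: Directed graph: $(V,\mathcal E)$, $\mathcal E\subseteq V\times V$ without loops; circuits and paths as usual (a path joins two vertices by a sequence of distinct vertices with consecutive ones joined by an edge in either direction). A directed tree is connected, has no circuits, and every vertex with an incoming edge has exactly one (parent $\mathsf{par}(v)$); rooted: a (unique) vertex $\mathsf{root}$ without incoming edge. $\mathsf{Chi}(u)=\{v:(u,v)\in\mathcal E\}$; locally finite: all $\mathsf{Chi}(u)$ finite; leafless: all $\mathsf{Chi}(u)\ne\emptyset$; all directed trees are assumed leafless. Depth of $u$ in a rooted tree: $n$ with $u\in\mathsf{Chi}^n(\mathsf{root})$. Branching index: $1+\sup\{\text{depth}(w):\mathrm{card}\,\mathsf{Chi}(w)\ge2\}$ if such $w$ exist, else $0$. For rooted trees $\mathscr T_j=(V_j,\mathcal E_j)$ with roots $\mathsf{root}_j$: the tensor product is $\mathscr T^\otimes=(V,\mathcal E^\otimes)$, $V=V_1\times\dots\times V_d$, $(\mathfrak v,\mathfrak w)\in\mathcal E^\otimes$ iff $(\mathfrak v_j,\mathfrak w_j)\in\mathcal E_j$ for all $j$; the directed Cartesian product $\mathscr T=(V,\mathcal E)$ has $(v,w)\in\mathcal E$ iff for some $k$, $(v_k,w_k)\in\mathcal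 E_k$ and $w_j=v_j$ ($j\ne k$), and the depth of $v\in V$ in $\mathscr T$ is $\alpha_v\in\mathbb N^d$ with $j$-th entry the depth of $v_j$ in $\mathscr T_j$, $|\alpha_v|$ its entry sum. A component of $\mathscr T^\otimes$ is an equivalence class for the relation "$\mathfrak v=\mathfrak w$ or $\mathfrak v,\mathfrak w$ connected by a path in $\mathscr T^\otimes$", viewed with the induced edges. *)

theory Defs
  imports Main "HOL-Library.FuncSet" "HOL-Library.Extended_Nat" "HOL-Library.Countable_Set"
begin

definition dgraph :: "'a set \<Rightarrow> ('a \<times> 'a) set \<Rightarrow> bool" where
  "dgraph V E \<longleftrightarrow> E \<subseteq> V \<times> V \<and> (\<forall>v. (v, v) \<notin> E)"

definition is_path :: "'a set \<Rightarrow> ('a \<times> 'a) set \<Rightarrow> 'a list \<Rightarrow> bool" where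
  "is_path V E xs \<longleftrightarrow> xs \<noteq> [] \<and> distinct xs \<and> set xs \<subseteq> V \<and>
     (\<forall>i. Suc i < length xs \<longrightarrow> (xs ! i, xs ! Suc i) \<in> E \<or> (xs ! Suc i, xs ! i) \<in> E)"

definition path_joins :: "'a set \<Rightarrow> ('a \<times> 'a) set \<Rightarrow> 'a \<Rightarrow> 'a \<Rightarrow> bool" where
  "path_joins V E u w \<longleftrightarrow> (\<exists>xs. is_path V E xs \<and> hd xs = u \<and> last xs = w)"

definition is_circuit :: "('a \<times> 'a) set \<Rightarrow> 'a list \<Rightarrow> bool" where
  "is_circuit E xs \<longleftrightarrow> length xs \<ge> 2 \<and> distinct xs \<and>
     (\<forall>i. Suc i < length xs \<longrightarrow> (xs ! i, xs ! Suc i) \<in> E) \<and> (last xs, hd xs) \<in> E"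

definition has_circuit :: "('a \<times> 'a) set \<Rightarrow> bool" where
  "has_circuit E \<longleftrightarrow> (\<exists>xs. is_circuit E xs)"

definition connected_graph :: "'a set \<Rightarrow> ('a \<times> 'a) set \<Rightarrow> bool" where
  "connected_graph V E \<longleftrightarrow> (\<forall>u\<in>V. \<forall>w\<in>V. u \<noteq> w \<longrightarrow> path_joins V E u w)"

definition Chi :: "('a \<times> 'a) set \<Rightarrow> 'a \<Rightarrow> 'a set" where
  "Chi E u = {v. (u, v) \<in> E}"

definition ChiS :: "('a \<times> 'a) set \<Rightarrow> 'a set \<Rightarrow> 'a set" where
  "ChiS E A = {v. \<exists>u\<in>A. (u, v) \<in> E}"

definition locally_finite :: "'a set \<Rightarrow> ('a \<times> 'a) set \<Rightarrow> bool" where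
  "locally_finite V E \<longleftrightarrow> (\<forall>u\<in>V. finite (Chi E u))"

definition leafless :: "'a set \<Rightarrow> ('a \<times> 'a) set \<Rightarrow> bool" where
  "leafless V E \<longleftrightarrow> (\<forall>u\<in>V. Chi E u \<noteq> {})"

definition directed_tree :: "'a set \<Rightarrow> ('a \<times> 'a) set \<Rightarrow> bool" where
  "directed_tree V E \<longleftrightarrow> dgraph V E \<and> connected_graph V E \<and> \<not> has_circuit E \<and>
     (\<forall>v\<in>V. (\<exists>u. (u, v) \<in> E) \<longrightarrow> (\<exists>!u. (u, v) \<in> E))"

definition rooted_tree :: "'a set \<Rightarrow> ('a \<times> 'a) set \<Rightarrow> 'a \<Rightarrow> bool" where
  "rooted_tree V E r \<longleftrightarrow> directed_tree V E \<and> r \<in> V \<and> (\<forall>u. (u, r) \<notin> E)"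

definition depth :: "('a \<times> 'a) set \<Rightarrow> 'a \<Rightarrow> 'a \<Rightarrow> nat" where
  "depth E r u = (THE n. u \<in> (ChiS E ^^ n) {r})"

definition branches :: "('a \<times> 'a) set \<Rightarrow> 'a \<Rightarrow> bool" where
  "branches E w \<longleftrightarrow> (\<exists>x y. x \<in> Chi E w \<and> y \<in> Chi E w \<and> x \<noteq> y)"

definition branching_index :: "'a set \<Rightarrow> ('a \<times> 'a) set \<Rightarrow> 'a \<Rightarrow> enat" where
  "branching_index V E r =
     (if \<exists>w\<in>V. branches E w
      then eSuc (Sup {enat (depth E r w) | w. w \<in> V \<and> branches E w})
      else 0)"

section \<open>Products of d rooted trees (indices 0..d-1)\<close>

definition prodV :: "nat \<Rightarrow> (nat \<Rightarrow> 'a set) \<Rightarrow> (nat \<Rightarrow> 'a) set" where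
  "prodV d VV = PiE {..<d} VV"

definition tensorE :: "nat \<Rightarrow> (nat \<Rightarrow> 'a set) \<Rightarrow> (nat \<Rightarrow> ('a \<times> 'a) set)
    \<Rightarrow> ((nat \<Rightarrow> 'a) \<times> (nat \<Rightarrow> 'a)) set" where
  "tensorE d VV EE = {(v, w). v \<in> prodV d VV \<and> w \<in> prodV d VV \<and>
       (\<forall>j<d. (v j, w j) \<in> EE j)}"

definition cartE :: "nat \<Rightarrow> (nat \<Rightarrow> 'a set) \<Rightarrow> (nat \<Rightarrow> ('a \<times> 'a) set)
    \<Rightarrow> ((nat \<Rightarrow> 'a) \<times> (nat \<Rightarrow> 'a)) set" where
  "cartE d VV EE = {(v, w). v \<in> prodV d VV \<and> w \<in> prodV d VV \<and>
       (\<exists>k<d. (v k, w k) \<in> EE k \<and> (\<forall>j<d. j \<noteq> k \<longrightarrow> w j = v j))}"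

definition comp_of :: "'a set \<Rightarrow> ('a \<times> 'a) set \<Rightarrow> 'a \<Rightarrow> 'a set" where
  "comp_of V E v = {w \<in> V. w = v \<or> path_joins V E v w}"

definition components :: "'a set \<Rightarrow> ('a \<times> 'a) set \<Rightarrow> 'a set set" where
  "components V E = comp_of V E ` V"

definition induced :: "('a \<times> 'a) set \<Rightarrow> 'a set \<Rightarrow> ('a \<times> 'a) set" where
  "induced E C = E \<inter> (C \<times> C)"

definition RootT :: "nat \<Rightarrow> (nat \<Rightarrow> 'a set) \<Rightarrow> (nat \<Rightarrow> 'a) \<Rightarrow> (nat \<Rightarrow> 'a) set" where
  "RootT d VV r = {v \<in> prodV d VV. \<exists>j<d. v j = r j}"

definition root_tuple :: "nat \<Rightarrow> (nat \<Rightarrow> 'a) \<Rightarrow> (nat \<Rightarrow> 'a)" where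
  "root_tuple d r = restrict r {..<d}"

end

theory Submission
  imports Defs "HOL-Library.Transitive_Closure_Table"
begin

text \<open>An edge of the tensor product raises the depth of every coordinate by one. So the
  smallest coordinate depth \<open>m\<close> of a vertex drops by one along each reversed edge, and
  climbing \<open>m\<close> steps towards the roots in all coordinates at once sends every vertex to a
  vertex with some root coordinate, its root projection. The projection is constant along
  edges, and every vertex is joined to its projection by reversed edges, so the components are
  exactly the fibres of the projection, each a tree hanging from its point of
  \<open>Root\<^sup>\<otimes>\<close>. In the component of the root all coordinates of a vertex have the same depth
  \<open>n\<close>, which is its depth in that component; hence every depth occurs there, and a vertex
  of depth \<open>n\<close> branches iff one of its coordinates branches at depth \<open>n\<close> in its factor.\<close>

section \<open>Paths and components\<close>

abbreviation adjacent :: "('a \<times> 'a) set \<Rightarrow> 'a \<Rightarrow> 'a \<Rightarrow> bool" where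
  "adjacent E \<equiv> symclp (\<lambda>x y. (x, y) \<in> E)"

lemma successively_iff_nth:
  "successively P xs \<longleftrightarrow> (\<forall>i. Suc i < length xs \<longrightarrow> P (xs ! i) (xs ! Suc i))"
proof (induction P xs rule: successively.induct)
  case (3 P x y xs)
  then show ?case by (auto simp: nth_Cons split: nat.splits)
qed auto

lemma is_path_iff_successively:
  "is_path V E xs \<longleftrightarrow> xs \<noteq> [] \<and> distinct xs \<and> set xs \<subseteq> V \<and> successively (adjacent E) xs"
  by (simp add: is_path_def successively_iff_nth symclp_def)

lemma rtrancl_path_iff_successively:
  "rtrancl_path r x xs y \<longleftrightarrow> successively r (x # xs) \<and> last (x # xs) = y"
proof (induction xs arbitrary: x)
  case Nil
  then show ?case by (auto intro: rtrancl_path.base elim: rtrancl_path.cases)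
next
  case (Cons z xs)
  have "rtrancl_path r x (z # xs) y \<longleftrightarrow> r x z \<and> rtrancl_path r z xs y"
    by (auto intro: rtrancl_path.step elim: rtrancl_path.cases)
  then show ?case using Cons.IH by simp
qed

lemma path_joins_iff_rtranclp:
  assumes "E \<subseteq> V \<times> V" and "u \<in> V"
  shows "path_joins V E u w \<longleftrightarrow> (adjacent E)\<^sup>*\<^sup>* u w"
proof
  assume "path_joins V E u w"
  then obtain xs where "is_path V E xs" "hd xs = u" "last xs = w"
    unfolding path_joins_def by blast
  then have "rtrancl_path (adjacent E) u (tl xs) w"
    by (cases xs) (auto simp: is_path_iff_successively rtrancl_path_iff_successively)
  then show "(adjacent E)\<^sup>*\<^sup>* u w"
    using rtranclp_eq_rtrancl_path by metis
next
  assume "(adjacent E)\<^sup>*\<^sup>* u w"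
  then obtain xs where "rtrancl_path (adjacent E) u xs w"
    using rtranclp_eq_rtrancl_path by metis
  then obtain ys where ys: "rtrancl_path (adjacent E) u ys w" "distinct (u # ys)"
    by (rule rtrancl_path_distinct)
  have "set ys \<subseteq> V"
    using rtrancl_path_Range[OF ys(1)] assms(1) by (fastforce elim: symclpE)
  then have "is_path V E (u # ys)"
    using ys assms(2) by (simp add: is_path_iff_successively rtrancl_path_iff_successively)
  then show "path_joins V E u w"
    using ys(1) unfolding path_joins_def rtrancl_path_iff_successively by force
qed

lemma comp_of_eq_rtranclp:
  assumes "E \<subseteq> V \<times> V" and "v \<in> V"
  shows "comp_of V E v = {w. (adjacent E)\<^sup>*\<^sup>* v w}"
proof -
  have "w \<in> V" if "(adjacent E)\<^sup>*\<^sup>* v w" for w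
    using that assms by (induction rule: rtranclp_induct) (auto elim: symclpE)
  then show ?thesis
    using path_joins_iff_rtranclp[OF assms] assms(2) by (auto simp: comp_of_def)
qed

lemma connected_graph_comp_of:
  assumes E: "E \<subseteq> V \<times> V" and v: "v \<in> V"
  defines "C \<equiv> comp_of V E v"
  shows "connected_graph C (induced E C)"
  unfolding connected_graph_def
proof (intro ballI impI)
  fix u w assume "u \<in> C" "w \<in> C"
  have C_iff: "x \<in> C \<longleftrightarrow> (adjacent E)\<^sup>*\<^sup>* v x" for x
    using comp_of_eq_rtranclp[OF E v] unfolding C_def by simp
  have "(adjacent E)\<^sup>*\<^sup>* u w"
    using \<open>u \<in> C\<close> \<open>w \<in> C\<close> C_iff by (meson rtranclp_symclp_sym rtranclp_trans)
  then have "w \<in> C \<and> (adjacent (induced E C))\<^sup>*\<^sup>* u w"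
  proof (induction rule: rtranclp_induct)
    case base
    then show ?case using \<open>u \<in> C\<close> by simp
  next
    case (step x y)
    then have "y \<in> C"
      using C_iff by (meson rtranclp.rtrancl_into_rtrancl)
    then have "adjacent (induced E C) x y"
      using step by (auto simp: induced_def symclp_def)
    then show ?case using step \<open>y \<in> C\<close> by (auto intro: rtranclp.rtrancl_into_rtrancl)
  qed
  moreover have "induced E C \<subseteq> C \<times> C" by (auto simp: induced_def)
  ultimately show "path_joins C (induced E C) u w"
    using path_joins_iff_rtranclp \<open>u \<in> C\<close> by metis
qed

lemma has_circuit_induced: "has_circuit (induced E C) \<Longrightarrow> has_circuit E"
  unfolding has_circuit_def is_circuit_def induced_def by blast

lemma not_has_circuit_graded:
  assumes graded: "\<And>x y. (x, y) \<in> E \<Longrightarrow> f y = Suc (f x)"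
  shows "\<not> has_circuit E"
proof
  assume "has_circuit E"
  then obtain xs where xs: "length xs \<ge> 2" "\<forall>i. Suc i < length xs \<longrightarrow> (xs ! i, xs ! Suc i) \<in> E"
    "(last xs, hd xs) \<in> E"
    unfolding has_circuit_def is_circuit_def by blast
  have f_nth: "i < length xs \<Longrightarrow> f (xs ! i) = f (xs ! 0) + i" for i
  proof (induction i)
    case (Suc i)
    then show ?case using graded[of "xs ! i" "xs ! Suc i"] xs(2) by simp
  qed simp
  have "xs \<noteq> []" using xs(1) by auto
  then have "f (last xs) = f (hd xs) + (length xs - 1)"
    using f_nth[of "length xs - 1"] by (simp add: last_conv_nth hd_conv_nth)
  then show False
    using graded[OF xs(3)] by simp
qed

lemma rooted_tree_comp_of:
  assumes "dgraph V E" and "\<not> has_circuit E"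
    and parent_unique: "\<And>u u' v. (u, v) \<in> E \<Longrightarrow> (u', v) \<in> E \<Longrightarrow> u = u'"
    and "q \<in> V" and "\<And>u. (u, q) \<notin> E"
  shows "rooted_tree (comp_of V E q) (induced E (comp_of V E q)) q"
proof -
  let ?C = "comp_of V E q"
  have "E \<subseteq> V \<times> V" using assms(1) by (simp add: dgraph_def)
  then have "connected_graph ?C (induced E ?C)"
    using \<open>q \<in> V\<close> by (rule connected_graph_comp_of)
  moreover have "dgraph ?C (induced E ?C)"
    using assms(1) unfolding dgraph_def induced_def by blast
  moreover have "\<not> has_circuit (induced E ?C)"
    using assms(2) has_circuit_induced by blast
  moreover have "\<forall>v\<in>?C. (\<exists>u. (u, v) \<in> induced E ?C) \<longrightarrow> (\<exists>!u. (u, v) \<in> induced E ?C)"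
    using parent_unique unfolding induced_def by blast
  moreover have "q \<in> ?C" using \<open>q \<in> V\<close> by (simp add: comp_of_def)
  moreover have "(u, q) \<notin> induced E ?C" for u
    using assms(5) by (simp add: induced_def)
  ultimately show ?thesis
    unfolding rooted_tree_def directed_tree_def by blast
qed

section \<open>Levels in rooted trees\<close>

definition level :: "('a \<times> 'a) set \<Rightarrow> 'a \<Rightarrow> nat \<Rightarrow> 'a set" where
  "level E r n = (ChiS E ^^ n) {r}"

definition parent :: "('a \<times> 'a) set \<Rightarrow> 'a \<Rightarrow> 'a" where
  "parent E x = (THE u. (u, x) \<in> E)"

lemma level_0 [simp]: "level E r 0 = {r}"
  by (simp add: level_def)

lemma level_Suc: "level E r (Suc n) = ChiS E (level E r n)"
  by (simp add: level_def)

lemma edge_level_Suc: "x \<in> level E r n \<Longrightarrow> (x, y) \<in> E \<Longrightarrow> y \<in> level E r (Suc n)"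
  by (auto simp: level_Suc ChiS_def)

locale rooted_dtree =
  fixes V :: "'a set" and E :: "('a \<times> 'a) set" and r :: 'a
  assumes rooted_tree: "rooted_tree V E r"
begin

lemma edge_vertices: "(x, y) \<in> E \<Longrightarrow> x \<in> V \<and> y \<in> V"
  using rooted_tree unfolding rooted_tree_def directed_tree_def dgraph_def by blast

lemma root_in_vertices: "r \<in> V"
  using rooted_tree unfolding rooted_tree_def by blast

lemma no_edge_into_root: "(u, r) \<notin> E"
  using rooted_tree unfolding rooted_tree_def by blast

lemma parent_unique: "(u, v) \<in> E \<Longrightarrow> (u', v) \<in> E \<Longrightarrow> u = u'"
  using rooted_tree edge_vertices unfolding rooted_tree_def directed_tree_def by metis

lemma parent_eqI: "(u, v) \<in> E \<Longrightarrow> parent E v = u"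
  unfolding parent_def using parent_unique by blast

lemma level_subset: "level E r n \<subseteq> V"
  by (induction n) (auto simp: level_Suc ChiS_def root_in_vertices dest: edge_vertices)

lemma parent_in_level:
  assumes "x \<in> level E r (Suc n)"
  shows "(parent E x, x) \<in> E" and "parent E x \<in> level E r n"
  using assms parent_eqI by (auto simp: level_Suc ChiS_def)

lemma level_unique: "x \<in> level E r n \<Longrightarrow> x \<in> level E r m \<Longrightarrow> n = m"
proof (induction n arbitrary: m x)
  case 0
  then show ?case using no_edge_into_root by (cases m) (auto simp: level_Suc ChiS_def)
next
  case (Suc n)
  show ?case
  proof (cases m)
    case 0
    then show ?thesis
      using Suc.prems parent_in_level(1) no_edge_into_root by fastforce
  next
    case (Suc k)
    then show ?thesis
      using Suc.IH Suc.prems parent_in_level(2) by blast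
  qed
qed

lemma reverse_edge_level:
  assumes "x \<in> level E r n" and "(y, x) \<in> E"
  obtains m where "n = Suc m" and "y \<in> level E r m"
proof (cases n)
  case 0
  then show ?thesis using assms no_edge_into_root by simp
next
  case (Suc m)
  then show ?thesis
    using that assms parent_in_level(2) parent_eqI by metis
qed

lemma in_some_level:
  assumes "x \<in> V"
  shows "\<exists>n. x \<in> level E r n"
proof -
  have "(adjacent E)\<^sup>*\<^sup>* r x"
  proof (cases "x = r")
    case False
    have "connected_graph V E"
      using rooted_tree unfolding rooted_tree_def directed_tree_def by blast
    then have "path_joins V E r x"
      using False assms root_in_vertices unfolding connected_graph_def by (simp add: eq_commute)
    moreover have "E \<subseteq> V \<times> V" using edge_vertices by auto
    ultimately show ?thesis
      using path_joins_iff_rtranclp[OF _ root_in_vertices] by blast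
  qed simp
  then show ?thesis
  proof (induction rule: rtranclp_induct)
    case (step x y)
    then obtain n where n: "x \<in> level E r n" by blast
    from step.hyps(2) show ?case
    proof (cases rule: symclpE)
      case base
      then show ?thesis using edge_level_Suc[OF n] by blast
    next
      case sym
      then show ?thesis using reverse_edge_level[OF n] by metis
    qed
  qed (auto intro: exI[of _ 0])
qed

lemma depth_eqI: "x \<in> level E r n \<Longrightarrow> depth E r x = n"
  unfolding depth_def level_def[symmetric]
  by (intro the_equality) (auto dest: level_unique)

lemma in_level_depth: "x \<in> V \<Longrightarrow> x \<in> level E r (depth E r x)"
proof -
  assume "x \<in> V"
  then obtain n where "x \<in> level E r n" using in_some_level by blast
  then show ?thesis using depth_eqI by simp
qed

lemma depth_edge: "(x, y) \<in> E \<Longrightarrow> depth E r y = Suc (depth E r x)"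
  by (intro depth_eqI edge_level_Suc[of x] in_level_depth) (auto dest: edge_vertices)

lemma depth_eq_0_iff: "x \<in> V \<Longrightarrow> depth E r x = 0 \<longleftrightarrow> x = r"
  using in_level_depth[of x] depth_eqI[of r 0] by auto

lemma ancestor_in_level: "x \<in> level E r (n + k) \<Longrightarrow> (parent E ^^ k) x \<in> level E r n"
proof (induction k arbitrary: x)
  case (Suc k)
  then have "parent E x \<in> level E r (n + k)"
    using parent_in_level(2) by simp
  then show ?case
    using Suc.IH by (simp add: funpow_Suc_right del: funpow.simps)
qed simp

lemma level_nonempty:
  assumes "leafless V E"
  shows "level E r n \<noteq> {}"
proof (induction n)
  case (Suc n)
  then obtain x where x: "x \<in> level E r n" by blast
  moreover obtain y where "(x, y) \<in> E"
    using assms x level_subset unfolding leafless_def Chi_def by blast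
  ultimately have "y \<in> level E r (Suc n)" by (rule edge_level_Suc)
  then show ?case by blast
qed simp

end

section \<open>Finite products of sets and suprema\<close>

lemma finite_PiE_iff:
  assumes "finite I" and "Pi\<^sub>E I F \<noteq> {}"
  shows "finite (Pi\<^sub>E I F) \<longleftrightarrow> (\<forall>i\<in>I. finite (F i))"
proof
  assume fin: "finite (Pi\<^sub>E I F)"
  show "\<forall>i\<in>I. finite (F i)"
  proof
    fix i assume "i \<in> I"
    then have "(\<lambda>f. f i) ` Pi\<^sub>E I F = F i"
      using assms(2) by (simp add: image_projection_PiE)
    then show "finite (F i)" using fin finite_imageI by metis
  qed
qed (use assms(1) in \<open>simp add: finite_PiE\<close>)

lemma PiE_nontrivial_iff:
  assumes "Pi\<^sub>E I F \<noteq> {}"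
  shows "(\<exists>x\<in>Pi\<^sub>E I F. \<exists>y\<in>Pi\<^sub>E I F. x \<noteq> y) \<longleftrightarrow> (\<exists>i\<in>I. \<exists>a\<in>F i. \<exists>b\<in>F i. a \<noteq> b)"
proof
  assume "\<exists>x\<in>Pi\<^sub>E I F. \<exists>y\<in>Pi\<^sub>E I F. x \<noteq> y"
  then obtain x y where "x \<in> Pi\<^sub>E I F" "y \<in> Pi\<^sub>E I F" "x \<noteq> y" by blast
  then show "\<exists>i\<in>I. \<exists>a\<in>F i. \<exists>b\<in>F i. a \<noteq> b"
    using PiE_ext by (metis PiE_mem)
next
  assume "\<exists>i\<in>I. \<exists>a\<in>F i. \<exists>b\<in>F i. a \<noteq> b"
  then obtain i a b where "i \<in> I" "a \<in> F i" "b \<in> F i" "a \<noteq> b" by blast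
  moreover obtain f where "f \<in> Pi\<^sub>E I F" using assms by blast
  ultimately have "f(i := a) \<in> Pi\<^sub>E I F" "f(i := b) \<in> Pi\<^sub>E I F" "f(i := a) \<noteq> f(i := b)"
    by (auto simp: fun_upd_in_PiE dest: fun_cong[where x = i])
  then show "\<exists>x\<in>Pi\<^sub>E I F. \<exists>y\<in>Pi\<^sub>E I F. x \<noteq> y" by blast
qed

lemma countable_PiE:
  "finite I \<Longrightarrow> (\<And>i. i \<in> I \<Longrightarrow> countable (F i)) \<Longrightarrow> countable (Pi\<^sub>E I F)"
  by (induct I arbitrary: F rule: finite_induct) (auto simp: PiE_insert_eq)

text \<open>The left-hand side has the shape of \<open>branching_index_def\<close>: the branching index of a union
  of depth sets is the largest of the individual branching indices.\<close>

lemma eSuc_Sup_UN_eq_Max: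
  fixes T :: "'i \<Rightarrow> enat set"
  assumes "finite I" and "I \<noteq> {}"
  shows "(if (\<Union>i\<in>I. T i) \<noteq> {} then eSuc (Sup (\<Union>i\<in>I. T i)) else 0)
       = Max ((\<lambda>i. if T i \<noteq> {} then eSuc (Sup (T i)) else 0) ` I)"
proof -
  have eSuc_Sup: "(if X \<noteq> {} then eSuc (Sup X) else 0) = Sup (eSuc ` X)" for X :: "enat set"
    by (simp add: eSuc_Sup bot_enat_def)
  have "Sup (eSuc ` (\<Union>i\<in>I. T i)) = (SUP i\<in>I. Sup (eSuc ` T i))"
    using SUP_UNION[where f = id and g = "\<lambda>i. eSuc ` T i" and A = I] by (simp add: image_UN)
  also have "\<dots> = Max ((\<lambda>i. Sup (eSuc ` T i)) ` I)"
    using assms by (intro cSup_eq_Max) auto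
  finally show ?thesis unfolding eSuc_Sup .
qed

section \<open>Tensor products of rooted trees\<close>

definition min_depth :: "nat \<Rightarrow> (nat \<Rightarrow> ('a \<times> 'a) set) \<Rightarrow> (nat \<Rightarrow> 'a) \<Rightarrow> (nat \<Rightarrow> 'a) \<Rightarrow> nat" where
  "min_depth d EE r v = Min ((\<lambda>j. depth (EE j) (r j) (v j)) ` {..<d})"

definition tensor_parent :: "nat \<Rightarrow> (nat \<Rightarrow> ('a \<times> 'a) set) \<Rightarrow> (nat \<Rightarrow> 'a) \<Rightarrow> (nat \<Rightarrow> 'a)" where
  "tensor_parent d EE v = restrict (\<lambda>j. parent (EE j) (v j)) {..<d}"

definition root_projection ::
    "nat \<Rightarrow> (nat \<Rightarrow> ('a \<times> 'a) set) \<Rightarrow> (nat \<Rightarrow> 'a) \<Rightarrow> (nat \<Rightarrow> 'a) \<Rightarrow> (nat \<Rightarrow> 'a)" where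
  "root_projection d EE r v = restrict (\<lambda>j. (parent (EE j) ^^ min_depth d EE r v) (v j)) {..<d}"

definition diagonal_level ::
    "nat \<Rightarrow> (nat \<Rightarrow> 'a set) \<Rightarrow> (nat \<Rightarrow> ('a \<times> 'a) set) \<Rightarrow> (nat \<Rightarrow> 'a) \<Rightarrow> nat \<Rightarrow> (nat \<Rightarrow> 'a) set" where
  "diagonal_level d VV EE r n = {w \<in> prodV d VV. \<forall>j<d. depth (EE j) (r j) (w j) = n}"

locale tree_product =
  fixes d :: nat and VV :: "nat \<Rightarrow> 'a set" and EE :: "nat \<Rightarrow> ('a \<times> 'a) set"
    and r :: "nat \<Rightarrow> 'a"
  assumes d_pos: "d \<ge> 1"
    and factors: "\<And>j. j < d \<Longrightarrow> rooted_tree (VV j) (EE j) (r j) \<and> leafless (VV j) (EE j)"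
begin

abbreviation "VP \<equiv> prodV d VV"
abbreviation "TE \<equiv> tensorE d VV EE"
abbreviation "RR \<equiv> RootT d VV r"
abbreviation "dp j x \<equiv> depth (EE j) (r j) x"
abbreviation "md \<equiv> min_depth d EE r"
abbreviation "rho \<equiv> root_projection d EE r"
abbreviation "tp \<equiv> tensor_parent d EE"

lemma factor: "j < d \<Longrightarrow> rooted_dtree (VV j) (EE j) (r j)"
  using factors by (simp add: rooted_dtree_def)

lemma factor_leafless: "j < d \<Longrightarrow> leafless (VV j) (EE j)"
  using factors by simp

lemma mem_prodV_iff: "v \<in> VP \<longleftrightarrow> (\<forall>j<d. v j \<in> VV j) \<and> (\<forall>j\<ge>d. v j = undefined)"
  by (auto simp: prodV_def PiE_def extensional_def)

lemma mem_tensorE_iff: "(u, w) \<in> TE \<longleftrightarrow> u \<in> VP \<and> w \<in> VP \<and> (\<forall>j<d. (u j, w j) \<in> EE j)"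
  by (simp add: tensorE_def)

lemma mem_RootT_iff: "v \<in> RR \<longleftrightarrow> v \<in> VP \<and> (\<exists>j<d. v j = r j)"
  by (simp add: RootT_def)

lemma depth_tensorE: "(u, w) \<in> TE \<Longrightarrow> j < d \<Longrightarrow> dp j (w j) = Suc (dp j (u j))"
  using rooted_dtree.depth_edge[OF factor] by (auto simp: mem_tensorE_iff)

lemma min_depth_attained: "\<exists>j<d. dp j (v j) = md v"
proof -
  have "md v \<in> (\<lambda>j. dp j (v j)) ` {..<d}"
    unfolding min_depth_def using d_pos by (intro Min_in) (auto simp: lessThan_empty_iff)
  then show ?thesis by auto
qed

lemma min_depth_le: "j < d \<Longrightarrow> md v \<le> dp j (v j)"
  unfolding min_depth_def by (intro Min_le) auto

lemma min_depth_tensorE: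
  assumes "(u, w) \<in> TE"
  shows "md w = Suc (md u)"
proof -
  have "(\<lambda>j. dp j (w j)) ` {..<d} = Suc ` (\<lambda>j. dp j (u j)) ` {..<d}"
    using depth_tensorE[OF assms] by (auto simp: image_iff)
  moreover have "Min (Suc ` (\<lambda>j. dp j (u j)) ` {..<d}) = Suc (Min ((\<lambda>j. dp j (u j)) ` {..<d}))"
    using d_pos by (intro mono_Min_commute[symmetric]) (auto simp: mono_def lessThan_empty_iff)
  ultimately show ?thesis unfolding min_depth_def by simp
qed

lemma min_depth_eq_0_iff:
  assumes "v \<in> VP"
  shows "md v = 0 \<longleftrightarrow> v \<in> RR"
proof
  assume "md v = 0"
  then obtain j where "j < d" "dp j (v j) = 0" using min_depth_attained by metis
  then show "v \<in> RR"
    using rooted_dtree.depth_eq_0_iff[OF factor] assms by (auto simp: mem_prodV_iff mem_RootT_iff)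
next
  assume "v \<in> RR"
  then obtain j where "j < d" "v j = r j" by (auto simp: mem_RootT_iff)
  then show "md v = 0"
    using min_depth_le[of j v] rooted_dtree.depth_eq_0_iff[OF factor] rooted_dtree.root_in_vertices[OF factor]
    by fastforce
qed

lemma root_projection_in_level:
  assumes "v \<in> VP" and "j < d"
  shows "rho v j \<in> level (EE j) (r j) (dp j (v j) - md v)"
proof -
  have "v j \<in> level (EE j) (r j) ((dp j (v j) - md v) + md v)"
    using rooted_dtree.in_level_depth[OF factor] assms min_depth_le[of j v]
    by (simp add: mem_prodV_iff)
  then show ?thesis
    using rooted_dtree.ancestor_in_level[OF factor[OF assms(2)]] assms(2)
    by (simp add: root_projection_def)
qed

lemma root_projection_in_RootT:
  assumes "v \<in> VP"
  shows "rho v \<in> RR"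
proof -
  have "rho v \<in> VP"
    using root_projection_in_level[OF assms] rooted_dtree.level_subset[OF factor]
    by (auto simp: mem_prodV_iff root_projection_def)
  moreover obtain j where "j < d" "dp j (v j) = md v"
    using min_depth_attained by metis
  then have "rho v j = r j"
    using root_projection_in_level[OF assms] by fastforce
  ultimately show ?thesis
    using \<open>j < d\<close> by (auto simp: mem_RootT_iff)
qed

lemma root_projection_eq_self:
  assumes "v \<in> RR"
  shows "rho v = v"
proof -
  have "v \<in> VP" "md v = 0"
    using assms min_depth_eq_0_iff by (auto simp: mem_RootT_iff)
  then show ?thesis
    by (auto simp: root_projection_def mem_prodV_iff fun_eq_iff)
qed

lemma root_projection_tensorE:
  assumes "(u, w) \<in> TE"
  shows "rho w = rho u"
proof -
  have "parent (EE j) (w j) = u j" if "j < d" for j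
    using assms that rooted_dtree.parent_eqI[OF factor] by (auto simp: mem_tensorE_iff)
  then show ?thesis
    using min_depth_tensorE[OF assms]
    by (auto simp: root_projection_def fun_eq_iff funpow_Suc_right simp del: funpow.simps)
qed

lemma tensor_parent_tensorE:
  assumes "v \<in> VP" and "v \<notin> RR"
  shows "(tp v, v) \<in> TE"
proof -
  have parent_edge: "(parent (EE j) (v j), v j) \<in> EE j" if j: "j < d" for j
  proof -
    have "v j \<in> VV j" "v j \<noteq> r j"
      using assms j by (auto simp: mem_prodV_iff mem_RootT_iff)
    then obtain n where "v j \<in> level (EE j) (r j) (Suc n)"
      using rooted_dtree.in_level_depth[OF factor[OF j]]
        rooted_dtree.depth_eq_0_iff[OF factor[OF j]] by (metis not0_implies_Suc)
    then show ?thesis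
      using rooted_dtree.parent_in_level(1)[OF factor[OF j]] by blast
  qed
  then have "tp v \<in> VP"
    using rooted_dtree.edge_vertices[OF factor] by (auto simp: mem_prodV_iff tensor_parent_def)
  then show ?thesis
    using parent_edge assms(1) by (auto simp: mem_tensorE_iff tensor_parent_def)
qed

lemma tensorE_parent_eq:
  assumes "(u, v) \<in> TE"
  shows "u = tp v"
proof
  fix j
  show "u j = tp v j"
  proof (cases "j < d")
    case True
    then have "parent (EE j) (v j) = u j"
      using assms rooted_dtree.parent_eqI[OF factor[OF True]] by (simp add: mem_tensorE_iff)
    then show ?thesis
      using True by (simp add: tensor_parent_def)
  next
    case False
    then show ?thesis
      using assms by (simp add: mem_tensorE_iff mem_prodV_iff tensor_parent_def)
  qed
qed

lemma tensorE_subset: "TE \<subseteq> VP \<times> VP"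
  by (auto simp: mem_tensorE_iff)

lemma rtranclp_root_projection:
  assumes "v \<in> VP"
  shows "(adjacent TE)\<^sup>*\<^sup>* v (rho v)"
  using assms
proof (induction "md v" arbitrary: v)
  case 0
  then show ?case using min_depth_eq_0_iff root_projection_eq_self by simp
next
  case (Suc n)
  then have "v \<notin> RR" using min_depth_eq_0_iff by fastforce
  then have edge: "(tp v, v) \<in> TE" using tensor_parent_tensorE Suc.prems by blast
  then have "n = md (tp v)" and "tp v \<in> VP"
    using min_depth_tensorE[OF edge] Suc.hyps(2) by (auto simp: mem_tensorE_iff)
  then have "(adjacent TE)\<^sup>*\<^sup>* (tp v) (rho v)"
    using Suc.hyps(1) root_projection_tensorE[OF edge] by metis
  moreover have "adjacent TE v (tp v)" using edge by (simp add: symclp_def)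
  ultimately show ?case by (meson converse_rtranclp_into_rtranclp)
qed

lemma root_projection_rtranclp: "(adjacent TE)\<^sup>*\<^sup>* u w \<Longrightarrow> rho w = rho u"
proof (induction rule: rtranclp_induct)
  case (step x y)
  from step.hyps(2) have "rho y = rho x"
    by (cases rule: symclpE) (auto dest: root_projection_tensorE)
  then show ?case using step.IH by simp
qed simp

lemma comp_of_tensorE:
  assumes "v \<in> VP"
  shows "comp_of VP TE v = {w \<in> VP. rho w = rho v}"
proof (intro set_eqI iffI)
  fix w assume w: "w \<in> comp_of VP TE v"
  then have "(adjacent TE)\<^sup>*\<^sup>* v w"
    using comp_of_eq_rtranclp[OF tensorE_subset assms] by simp
  then show "w \<in> {w \<in> VP. rho w = rho v}"
    using w root_projection_rtranclp by (auto simp: comp_of_def)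
next
  fix w assume "w \<in> {w \<in> VP. rho w = rho v}"
  then have w: "w \<in> VP" "rho w = rho v" by auto
  have "(adjacent TE)\<^sup>*\<^sup>* w (rho v)"
    using rtranclp_root_projection[OF w(1)] w(2) by simp
  moreover have "(adjacent TE)\<^sup>*\<^sup>* v (rho v)"
    using rtranclp_root_projection[OF assms] .
  ultimately have "(adjacent TE)\<^sup>*\<^sup>* v w"
    by (meson rtranclp_symclp_sym rtranclp_trans)
  then show "w \<in> comp_of VP TE v"
    using comp_of_eq_rtranclp[OF tensorE_subset assms] by simp
qed

lemma comp_of_root_projection:
  assumes "v \<in> VP"
  shows "comp_of VP TE (rho v) = comp_of VP TE v"
proof -
  have "rho v \<in> RR" using root_projection_in_RootT[OF assms] .
  then show ?thesis
    using comp_of_tensorE assms root_projection_eq_self by (simp add: mem_RootT_iff)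
qed

lemma no_tensorE_into_RootT:
  assumes "v \<in> RR"
  shows "(u, v) \<notin> TE"
proof
  assume "(u, v) \<in> TE"
  moreover obtain j where "j < d" "v j = r j" using assms by (auto simp: mem_RootT_iff)
  ultimately show False
    using rooted_dtree.no_edge_into_root[OF factor] by (fastforce simp: mem_tensorE_iff)
qed

lemma ex1_tensorE_into:
  assumes "v \<in> VP" and "v \<notin> RR"
  shows "\<exists>!u. u \<in> VP \<and> (u, v) \<in> TE"
proof (rule ex1I)
  show "tp v \<in> VP \<and> (tp v, v) \<in> TE"
    using tensor_parent_tensorE[OF assms] by (simp add: mem_tensorE_iff)
qed (use tensorE_parent_eq in blast)

lemma tensorE_not_has_circuit: "\<not> has_circuit TE"
  using depth_tensorE d_pos by (intro not_has_circuit_graded[of _ "\<lambda>v. dp 0 (v 0)"]) simp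

lemma dgraph_tensorE: "dgraph VP TE"
  using tensorE_subset depth_tensorE d_pos unfolding dgraph_def by fastforce

lemma RootT_not_path_joins:
  assumes "u \<in> RR" and "w \<in> RR" and "u \<noteq> w"
  shows "\<not> path_joins VP TE u w"
proof
  assume "path_joins VP TE u w"
  then have "(adjacent TE)\<^sup>*\<^sup>* u w"
    using path_joins_iff_rtranclp[OF tensorE_subset] assms(1) by (simp add: mem_RootT_iff)
  then show False
    using root_projection_rtranclp root_projection_eq_self assms by metis
qed

lemma bij_betw_comp_of_RootT: "bij_betw (comp_of VP TE) RR (components VP TE)"
proof (rule bij_betw_imageI)
  show "inj_on (comp_of VP TE) RR"
  proof
    fix q q' assume q: "q \<in> RR" "q' \<in> RR" and "comp_of VP TE q = comp_of VP TE q'"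
    moreover have "q \<in> comp_of VP TE q"
      using q by (simp add: comp_of_def mem_RootT_iff)
    ultimately have "rho q = rho q'"
      using comp_of_tensorE q(2) by (simp add: mem_RootT_iff)
    then show "q = q'" using q root_projection_eq_self by simp
  qed
  have "comp_of VP TE v \<in> comp_of VP TE ` RR" if "v \<in> VP" for v
    using that comp_of_root_projection root_projection_in_RootT by (metis image_eqI)
  then show "comp_of VP TE ` RR = components VP TE"
    unfolding components_def by (auto simp: mem_RootT_iff)
qed

lemma rooted_tree_components:
  assumes "C \<in> components VP TE"
  shows "\<exists>q\<in>RR \<inter> C. rooted_tree C (induced TE C) q"
proof -
  obtain v where v: "v \<in> VP" and C: "C = comp_of VP TE (rho v)"
    using assms comp_of_root_projection unfolding components_def by auto
  have q: "rho v \<in> RR" using root_projection_in_RootT[OF v] .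
  have parent_unique: "u = u'" if "(u, w) \<in> TE" "(u', w) \<in> TE" for u u' w
    using that tensorE_parent_eq by metis
  have "rooted_tree C (induced TE C) (rho v)"
    unfolding C using dgraph_tensorE tensorE_not_has_circuit parent_unique q
      no_tensorE_into_RootT
    by (intro rooted_tree_comp_of) (auto simp: mem_RootT_iff)
  moreover have "rho v \<in> C" using q C by (simp add: comp_of_def mem_RootT_iff)
  ultimately show ?thesis using q by blast
qed

lemma Chi_tensorE:
  assumes "v \<in> VP"
  shows "Chi TE v = Pi\<^sub>E {..<d} (\<lambda>j. Chi (EE j) (v j))"
proof (intro set_eqI iffI)
  fix w assume "w \<in> Pi\<^sub>E {..<d} (\<lambda>j. Chi (EE j) (v j))"
  then have "\<forall>j<d. (v j, w j) \<in> EE j" and "\<forall>j\<ge>d. w j = undefined"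
    by (auto simp: Chi_def PiE_iff extensional_def)
  moreover from this have "\<forall>j<d. w j \<in> VV j"
    using rooted_dtree.edge_vertices[OF factor] by blast
  ultimately show "w \<in> Chi TE v"
    using assms by (simp add: Chi_def mem_tensorE_iff mem_prodV_iff)
qed (auto simp: Chi_def mem_tensorE_iff mem_prodV_iff PiE_iff extensional_def)

lemma Chi_tensorE_nonempty:
  assumes "v \<in> VP"
  shows "Chi TE v \<noteq> {}"
  using assms factor_leafless unfolding Chi_tensorE[OF assms] PiE_eq_empty_iff
  by (auto simp: leafless_def mem_prodV_iff)

lemma leafless_tensorE: "leafless VP TE"
  using Chi_tensorE_nonempty by (simp add: leafless_def)

lemma Chi_cartE:
  assumes "v \<in> VP"
  shows "Chi (cartE d VV EE) v = (\<Union>k<d. (\<lambda>y. v(k := y)) ` Chi (EE k) (v k))"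
proof (intro set_eqI iffI)
  fix w assume "w \<in> Chi (cartE d VV EE) v"
  then obtain k where k: "k < d" "(v k, w k) \<in> EE k" "\<forall>j<d. j \<noteq> k \<longrightarrow> w j = v j" "w \<in> VP"
    by (auto simp: Chi_def cartE_def)
  have "w j = v j" if "j \<noteq> k" for j
    using k assms that by (cases "j < d") (auto simp: mem_prodV_iff)
  then have "w = v(k := w k)" by auto
  then show "w \<in> (\<Union>k<d. (\<lambda>y. v(k := y)) ` Chi (EE k) (v k))"
    using k by (auto simp: Chi_def)
next
  fix w assume "w \<in> (\<Union>k<d. (\<lambda>y. v(k := y)) ` Chi (EE k) (v k))"
  then show "w \<in> Chi (cartE d VV EE) v"
    using assms rooted_dtree.edge_vertices[OF factor]
    by (auto simp: Chi_def cartE_def mem_prodV_iff)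
qed

lemma locally_finite_tensorE_iff:
  "locally_finite VP TE \<longleftrightarrow> (\<forall>v\<in>VP. \<forall>j<d. finite (Chi (EE j) (v j)))"
proof -
  have "finite (Chi TE v) \<longleftrightarrow> (\<forall>j<d. finite (Chi (EE j) (v j)))" if "v \<in> VP" for v
    using finite_PiE_iff[of "{..<d}" "\<lambda>j. Chi (EE j) (v j)"]
      Chi_tensorE[OF that] Chi_tensorE_nonempty[OF that] by (simp add: Ball_def)
  then show ?thesis unfolding locally_finite_def by simp
qed

lemma locally_finite_cartE_iff:
  "locally_finite VP (cartE d VV EE) \<longleftrightarrow> (\<forall>v\<in>VP. \<forall>j<d. finite (Chi (EE j) (v j)))"
proof -
  have "finite ((\<lambda>y. v(k := y)) ` A) \<longleftrightarrow> finite A" for v :: "nat \<Rightarrow> 'a" and k A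
    by (rule finite_image_iff) (auto simp: inj_on_def dest: fun_cong[where x = k])
  then show ?thesis
    unfolding locally_finite_def using Chi_cartE by auto
qed

subsection \<open>The component of the root\<close>

abbreviation "rtup \<equiv> root_tuple d r"
abbreviation "Vroot \<equiv> comp_of VP TE rtup"
abbreviation "Froot \<equiv> induced TE Vroot"
abbreviation "L \<equiv> diagonal_level d VV EE r"

lemma root_tuple_in_RootT: "rtup \<in> RR"
proof -
  have "rtup \<in> VP"
    using rooted_dtree.root_in_vertices[OF factor] by (simp add: mem_prodV_iff root_tuple_def)
  moreover have "rtup 0 = r 0" using d_pos by (simp add: root_tuple_def)
  moreover have "0 < d" using d_pos by simp
  ultimately show ?thesis by (auto simp: mem_RootT_iff intro!: exI[of _ 0])
qed

lemma root_projection_eq_root_tuple_iff: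
  assumes "w \<in> VP"
  shows "rho w = rtup \<longleftrightarrow> (\<forall>j<d. dp j (w j) = md w)"
proof
  assume rho: "rho w = rtup"
  show "\<forall>j<d. dp j (w j) = md w"
  proof (intro allI impI)
    fix j assume j: "j < d"
    have "rho w j \<in> level (EE j) (r j) 0"
      using rho j by (simp add: root_tuple_def)
    then have "dp j (w j) - md w = 0"
      using root_projection_in_level[OF assms j] rooted_dtree.level_unique[OF factor[OF j]] by blast
    then show "dp j (w j) = md w"
      using min_depth_le[OF j, of w] by simp
  qed
next
  assume "\<forall>j<d. dp j (w j) = md w"
  then show "rho w = rtup"
    using root_projection_in_level[OF assms]
    by (auto simp: fun_eq_iff root_tuple_def root_projection_def)
qed

lemma min_depth_diagonal_level: "w \<in> L n \<Longrightarrow> md w = n"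
  using min_depth_attained by (auto simp: diagonal_level_def) metis

lemma diagonal_level_unique: "w \<in> L n \<Longrightarrow> w \<in> L m \<Longrightarrow> n = m"
  using min_depth_diagonal_level by blast

lemma root_component_iff: "w \<in> Vroot \<longleftrightarrow> (\<exists>n. w \<in> L n)"
proof -
  have "Vroot = {w \<in> VP. rho w = rtup}"
    using comp_of_tensorE root_projection_eq_self root_tuple_in_RootT by (simp add: mem_RootT_iff)
  then show ?thesis
    using root_projection_eq_root_tuple_iff min_depth_diagonal_level
    by (auto simp: diagonal_level_def)
qed

lemma diagonal_level_0: "L 0 = {rtup}"
proof -
  have "w = rtup" if "w \<in> L 0" for w
  proof
    fix j show "w j = rtup j"
      using that rooted_dtree.depth_eq_0_iff[OF factor]
      by (cases "j < d") (auto simp: diagonal_level_def mem_prodV_iff root_tuple_def)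
  qed
  moreover have "rtup \<in> L 0"
    using root_tuple_in_RootT rooted_dtree.depth_eq_0_iff[OF factor] rooted_dtree.root_in_vertices[OF factor]
    by (auto simp: diagonal_level_def mem_RootT_iff root_tuple_def)
  ultimately show ?thesis by blast
qed

lemma tensorE_diagonal_level: "(u, w) \<in> TE \<Longrightarrow> u \<in> L n \<longleftrightarrow> w \<in> L (Suc n)"
  using depth_tensorE by (auto simp: diagonal_level_def mem_tensorE_iff)

lemma ChiS_diagonal_level: "ChiS Froot (L n) = L (Suc n)"
proof (intro set_eqI iffI)
  fix w assume "w \<in> ChiS Froot (L n)"
  then show "w \<in> L (Suc n)"
    using tensorE_diagonal_level by (auto simp: ChiS_def induced_def)
next
  fix w assume w: "w \<in> L (Suc n)"
  then have wV: "w \<in> VP" and depth_w: "\<forall>j<d. dp j (w j) = Suc n"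
    by (auto simp: diagonal_level_def)
  moreover have "w \<notin> RR"
  proof
    assume "w \<in> RR"
    then obtain j where "j < d" "w j = r j" by (auto simp: mem_RootT_iff)
    then show False
      using depth_w rooted_dtree.depth_eq_0_iff[OF factor] rooted_dtree.root_in_vertices[OF factor]
      by force
  qed
  with wV have edge: "(tp w, w) \<in> TE" by (rule tensor_parent_tensorE)
  then have "tp w \<in> L n" using w tensorE_diagonal_level by blast
  moreover have "(tp w, w) \<in> Froot"
    using edge w calculation root_component_iff by (auto simp: induced_def)
  ultimately show "w \<in> ChiS Froot (L n)" by (auto simp: ChiS_def)
qed

lemma level_root_component: "level Froot rtup n = L n"
  by (induction n) (simp_all add: diagonal_level_0 level_Suc ChiS_diagonal_level)

lemma depth_root_component: "w \<in> L n \<Longrightarrow> depth Froot rtup w = n"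
  unfolding depth_def level_def[symmetric] level_root_component
  by (intro the_equality) (auto dest: diagonal_level_unique)

lemma diagonal_level_through:
  assumes "j < d" and "x \<in> level (EE j) (r j) n"
  shows "\<exists>w\<in>L n. w j = x"
proof -
  have "\<exists>y. y \<in> level (EE k) (r k) n" if "k < d" for k
    using rooted_dtree.level_nonempty[OF factor factor_leafless] that by blast
  then obtain y where y: "\<And>k. k < d \<Longrightarrow> y k \<in> level (EE k) (r k) n" by metis
  define w where "w = restrict (y(j := x)) {..<d}"
  have w_level: "w k \<in> level (EE k) (r k) n" if "k < d" for k
    using assms y that by (simp add: w_def)
  then have "w k \<in> VV k" and "dp k (w k) = n" if "k < d" for k
    using that rooted_dtree.level_subset[OF factor] rooted_dtree.depth_eqI[OF factor] by blast+
  then have "w \<in> L n"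
    by (auto simp: diagonal_level_def mem_prodV_iff w_def)
  moreover have "w j = x" using assms(1) by (simp add: w_def)
  ultimately show ?thesis by blast
qed

lemma Chi_root_component:
  assumes "w \<in> Vroot"
  shows "Chi Froot w = Chi TE w"
proof -
  obtain n where "w \<in> L n" using assms root_component_iff by blast
  then have "Chi TE w \<subseteq> Vroot"
    using tensorE_diagonal_level root_component_iff by (auto simp: Chi_def)
  then show ?thesis
    using assms by (auto simp: Chi_def induced_def)
qed

lemma branches_tensorE_iff:
  assumes "w \<in> VP"
  shows "branches TE w \<longleftrightarrow> (\<exists>j<d. branches (EE j) (w j))"
  using PiE_nontrivial_iff[OF Chi_tensorE_nonempty[OF assms, unfolded Chi_tensorE[OF assms]]]
  unfolding branches_def Chi_tensorE[OF assms] by auto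

lemma branches_root_component_iff:
  assumes "w \<in> Vroot"
  shows "branches Froot w \<longleftrightarrow> (\<exists>j<d. branches (EE j) (w j))"
  using assms branches_tensorE_iff Chi_root_component
  unfolding branches_def by (simp add: comp_of_def)

lemma branching_index_root_component:
  "branching_index Vroot Froot rtup = Max ((\<lambda>j. branching_index (VV j) (EE j) (r j)) ` {..<d})"
proof -
  define T where "T j = {enat (dp j x) | x. x \<in> VV j \<and> branches (EE j) x}" for j
  define S where "S = {enat (depth Froot rtup w) | w. w \<in> Vroot \<and> branches Froot w}"
  have S_eq: "S = (\<Union>j<d. T j)"
  proof (intro set_eqI iffI)
    fix e assume "e \<in> S"
    then obtain w n j where "e = enat n" "w \<in> L n" "j < d" "branches (EE j) (w j)"
      unfolding S_def using branches_root_component_iff root_component_iff depth_root_component by blast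
    then have "e \<in> T j"
      unfolding T_def by (auto simp: diagonal_level_def mem_prodV_iff)
    then show "e \<in> (\<Union>j<d. T j)" using \<open>j < d\<close> by blast
  next
    fix e assume "e \<in> (\<Union>j<d. T j)"
    then obtain j x where jx: "j < d" "x \<in> VV j" "branches (EE j) x" "e = enat (dp j x)"
      unfolding T_def by blast
    then obtain w where w: "w \<in> L (dp j x)" "w j = x"
      using diagonal_level_through rooted_dtree.in_level_depth[OF factor] by blast
    then have "w \<in> Vroot" and "branches Froot w" and "e = enat (depth Froot rtup w)"
      using jx branches_root_component_iff root_component_iff depth_root_component by auto
    then show "e \<in> S" unfolding S_def by blast
  qed
  have "branching_index Vroot Froot rtup = (if S \<noteq> {} then eSuc (Sup S) else 0)"
    unfolding branching_index_def S_def by (rule if_cong) auto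
  also have "\<dots> = Max ((\<lambda>j. if T j \<noteq> {} then eSuc (Sup (T j)) else 0) ` {..<d})"
    unfolding S_eq using d_pos by (intro eSuc_Sup_UN_eq_Max) (auto simp: lessThan_empty_iff)
  also have "(\<lambda>j. if T j \<noteq> {} then eSuc (Sup (T j)) else 0) = (\<lambda>j. branching_index (VV j) (EE j) (r j))"
    unfolding branching_index_def T_def by (intro ext if_cong) auto
  finally show ?thesis .
qed

lemma depth_root_component_surj: "\<exists>w\<in>Vroot. depth Froot rtup w = n"
proof -
  have "0 < d" using d_pos by simp
  then obtain x where "x \<in> level (EE 0) (r 0) n"
    using rooted_dtree.level_nonempty[OF factor factor_leafless] by blast
  then obtain w where "w \<in> L n"
    using diagonal_level_through \<open>0 < d\<close> by blast
  then show ?thesis using root_component_iff depth_root_component by blast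
qed

end

theorem mainTheorem10:
  fixes d :: nat and VV :: "nat \<Rightarrow> 'a set" and EE :: "nat \<Rightarrow> ('a \<times> 'a) set"
    and r :: "nat \<Rightarrow> 'a"
  assumes d: "d \<ge> 1"
    and trees: "\<And>j. j < d \<Longrightarrow> rooted_tree (VV j) (EE j) (r j) \<and> leafless (VV j) (EE j)"
  defines "V \<equiv> prodV d VV"
    and "Et \<equiv> tensorE d VV EE"
    and "Ec \<equiv> cartE d VV EE"
    and "R \<equiv> RootT d VV r"
    and "rt \<equiv> root_tuple d r"
    and "Vr \<equiv> comp_of (prodV d VV) (tensorE d VV EE) (root_tuple d r)"
    and "F \<equiv> induced (tensorE d VV EE) (comp_of (prodV d VV) (tensorE d VV EE) (root_tuple d r))"
  shows
    "(\<forall>v\<in>R. \<not> (\<exists>u\<in>V. (u, v) \<in> Et))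
   \<and> (\<forall>v\<in>V - R. \<exists>!u. u \<in> V \<and> (u, v) \<in> Et)
   \<and> \<not> has_circuit Et
   \<and> (\<forall>u\<in>R. \<forall>w\<in>R. u \<noteq> w \<longrightarrow> \<not> path_joins V Et u w)
   \<and> (\<exists>f. bij_betw f (components V Et) R)
   \<and> ((\<forall>j<d. countable (VV j)) \<longrightarrow> countable (components V Et))
   \<and> (\<forall>C\<in>components V Et. \<exists>q\<in>R \<inter> C. rooted_tree C (induced Et C) q)
   \<and> (locally_finite V Et \<longleftrightarrow> locally_finite V Ec)
   \<and> leafless V Et
   \<and> ((\<forall>j<d. branching_index (VV j) (EE j) (r j) \<noteq> \<infinity>) \<longrightarrow>
        branching_index Vr F rt = Max ((\<lambda>j. branching_index (VV j) (EE j) (r j)) ` {..<d}))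
   \<and> (\<forall>v\<in>V. \<exists>w\<in>Vr. (\<Sum>j<d. depth (EE j) (r j) (v j)) = depth F rt w)"
proof -
  interpret tree_product d VV EE r
    using d trees by unfold_locales
  have "countable (components V Et)" if "\<forall>j<d. countable (VV j)"
    using that unfolding V_def components_def prodV_def by (auto intro: countable_PiE)
  moreover have "\<exists>f. bij_betw f (components V Et) R"
    using bij_betw_inv_into[OF bij_betw_comp_of_RootT] unfolding V_def Et_def R_def by blast
  ultimately show ?thesis
    unfolding V_def Et_def Ec_def R_def rt_def Vr_def F_def
  proof (intro conjI)
    show "\<forall>v\<in>RR. \<not> (\<exists>u\<in>VP. (u, v) \<in> TE)"
      using no_tensorE_into_RootT by blast
    show "\<forall>v\<in>VP - RR. \<exists>!u. u \<in> VP \<and> (u, v) \<in> TE"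
      using ex1_tensorE_into by blast
    show "\<forall>u\<in>RR. \<forall>w\<in>RR. u \<noteq> w \<longrightarrow> \<not> path_joins VP TE u w"
      using RootT_not_path_joins by blast
    show "\<forall>C\<in>components VP TE. \<exists>q\<in>RR \<inter> C. rooted_tree C (induced TE C) q"
      using rooted_tree_components by blast
    show "\<forall>v\<in>VP. \<exists>w\<in>Vroot. (\<Sum>j<d. dp j (v j)) = depth Froot rtup w"
      using depth_root_component_surj by metis
  qed (simp_all add: tensorE_not_has_circuit locally_finite_tensorE_iff locally_finite_cartE_iff
      leafless_tensorE branching_index_root_component)
qed

end
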